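(* Consider a $2^k$ full factorial design under the generalized linear model described in the context, i.e., $m=p=2^k$ and the model matrix is \[ \mathbf{X}=\begin{bmatrix}1&-1\\1&1\end{bmatrix}\otimes\cdots\otimes\begin{bmatrix}1&-1\\1&1\end{bmatrix}\quad(k\text{ factors, Kronecker product}), \] and suppose $\nu_i>0$ for all $i$. Then an allocation $\mathbf{w}_*=(w_1^*,\ldots,w_m^* )^T\in S_m$ is A-optimal if and only if $w_i^*\propto\nu_i^{-1/2}$, $i=1,\ldots,m$. Furthermore, the uniform allocation $w_i^*=2^{-k}$ for all $i$ is A-optimal if and only if $\nu_1=\cdots=\nu_m$.
   Context: Generalized linear model (GLM): independent responses $Y_i$ from a one-parameter exponential family with $E(Y_i)=\mu_i$ and $\eta_i=g(\mu_i)=\mathbf{X}_i^T\boldsymbol\beta$, where $g$ is the link function, $\mathbf{X}_i=\mathbf{q}(\mathbf{x}_i)=(q_1(\mathbf{x}_i),\ldots,q_p(\mathbf{x}_i))^T$, and $\boldsymbol\beta\in\mathbb{R}^p$ is a fixed (assumed) parameter vector. Let $\nu_i=(\partial\mu_i/\partial\eta_i)^2/\mathrm{Var}(Y_i)\ge0$. The model matrix is $\mathbf{X}=(\mathbf{q}(\mathbf{x}_1),\ldots,\mathbf{q}(\mathbf{x}_m))^T$. Let $S_m=\{\mathbf{w}\in\mathbb{R}^m: w_i\ge 0,\sum_i w_i=1\}$, $\mathbf{W}=\mathrm{diag}\{w_1\nu_1,\ldots,w_m\nu_m\}$, $f(\mathbf{w})=|\mathbf{X}^T\mathbf{W}\mathbf{X}|$,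 and $h(\mathbf{w})=[\mathrm{tr}((\mathbf{X}^T\mathbf{W}\mathbf{X})^{-1})]^{-1}$ if $f(\mathbf{w})>0$, $h(\mathbf{w})=0$ otherwise. An allocation is A-optimal if it maximizes $h$ over $S_m$. *)

theory Defs
  imports "Jordan_Normal_Form.Matrix" "Jordan_Normal_Form.Determinant"
begin

text \<open>Kronecker product of matrices (row/column index of A is the more significant one).\<close>
definition kron :: "real mat \<Rightarrow> real mat \<Rightarrow> real mat" where
  "kron A B = mat (dim_row A * dim_row B) (dim_col A * dim_col B)
     (\<lambda>(i,j). A $$ (i div dim_row B, j div dim_col B) * B $$ (i mod dim_row B, j mod dim_col B))"

definition H2 :: "real mat" where
  "H2 = mat_of_rows_list 2 [[1, -1], [1, 1]]"

fun design_mat :: "nat \<Rightarrow> real mat" where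
  "design_mat 0 = 1\<^sub>m 1"
| "design_mat (Suc k) = kron H2 (design_mat k)"

definition trace_mat :: "real mat \<Rightarrow> real" where
  "trace_mat A = (\<Sum>i<dim_row A. A $$ (i,i))"

definition inv_mat :: "real mat \<Rightarrow> real mat" where
  "inv_mat A = (SOME B. B \<in> carrier_mat (dim_row A) (dim_row A)
       \<and> A * B = 1\<^sub>m (dim_row A) \<and> B * A = 1\<^sub>m (dim_row A))"

text \<open>Simplex S_m of allocations (only the coordinates i < m matter).\<close>
definition simplex :: "nat \<Rightarrow> (nat \<Rightarrow> real) set" where
  "simplex m = {w. (\<forall>i<m. 0 \<le> w i) \<and> (\<Sum>i<m. w i) = 1}"

definition info_mat :: "real mat \<Rightarrow> (nat \<Rightarrow> real) \<Rightarrow> (nat \<Rightarrow> real) \<Rightarrow> real mat" where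
  "info_mat X nu w = transpose_mat X
     * mat (dim_row X) (dim_row X) (\<lambda>(i,j). if i = j then w i * nu i else 0) * X"

definition f_crit :: "real mat \<Rightarrow> (nat \<Rightarrow> real) \<Rightarrow> (nat \<Rightarrow> real) \<Rightarrow> real" where
  "f_crit X nu w = det (info_mat X nu w)"

definition h_crit :: "real mat \<Rightarrow> (nat \<Rightarrow> real) \<Rightarrow> (nat \<Rightarrow> real) \<Rightarrow> real" where
  "h_crit X nu w = (if f_crit X nu w > 0
      then 1 / trace_mat (inv_mat (info_mat X nu w)) else 0)"

definition A_optimal :: "real mat \<Rightarrow> (nat \<Rightarrow> real) \<Rightarrow> (nat \<Rightarrow> real) \<Rightarrow> bool" where
  "A_optimal X nu w \<longleftrightarrow> w \<in> simplex (dim_row X)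
     \<and> (\<forall>v \<in> simplex (dim_row X). h_crit X nu v \<le> h_crit X nu w)"

end

theory Submission
  imports Defs
begin

text \<open>
  The model matrix X, the k-fold Kronecker power of H2, satisfies X^T X = X X^T = m I with
  m = 2^k, by the mixed-product rule for Kronecker products. Hence for positive weights
  d_i = w_i nu_i the information matrix X^T D X has inverse m^-2 X^T D^-1 X, and cyclicity of
  the trace gives h(w) = m / (sum_i 1/(w_i nu_i)), while h vanishes on the boundary of the
  simplex. With a_i = nu_i^(-1/2) and sum_i w_i = 1 one has the identity
  sum_i a_i^2/w_i = (sum_i a_i)^2 + sum_i (a_i - w_i sum_j a_j)^2/w_i,
  so h <= m / (sum_i a_i)^2 with equality exactly when w is proportional to a.
  The uniform allocation is of this form iff all nu_i coincide.
\<close>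

section \<open>Kronecker products\<close>

lemma sum_lessThan_mult:
  fixes g :: "nat \<Rightarrow> 'a::comm_monoid_add"
  shows "(\<Sum>l<a * b. g l) = (\<Sum>x<a. \<Sum>y<b. g (x * b + y))"
proof -
  have "(\<Sum>l\<in>{x * b..<x * b + b}. g l) = (\<Sum>y<b. g (x * b + y))" for x
    using sum.shift_bounds_nat_ivl[of g 0 "x * b" b]
    by (simp add: atLeast0LessThan add.commute)
  then show ?thesis
    by (simp flip: sum.nat_group)
qed

lemma mult_add_less_mult:
  fixes x y a b :: nat
  assumes "x < a" "y < b"
  shows "x * b + y < a * b"
proof -
  have "x * b + y < Suc x * b" using assms(2) by simp
  also have "\<dots> \<le> a * b" using assms(1) by (intro mult_le_mono1) simp
  finally show ?thesis .
qed

lemma div_mod_less_of_less_mult: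
  fixes i a b :: nat
  assumes "i < a * b"
  shows "i div b < a" "i mod b < b"
  using assms by (auto simp: less_mult_imp_div_less intro: mod_less_divisor
      dest: gr_implies_not0 simp del: mult_eq_0_iff)

lemma dim_kron [simp]:
  "dim_row (kron A B) = dim_row A * dim_row B"
  "dim_col (kron A B) = dim_col A * dim_col B"
  by (simp_all add: kron_def)

lemma index_kron:
  assumes "i < dim_row A * dim_row B" "j < dim_col A * dim_col B"
  shows "kron A B $$ (i, j) =
    A $$ (i div dim_row B, j div dim_col B) * B $$ (i mod dim_row B, j mod dim_col B)"
  using assms by (simp add: kron_def)

lemma transpose_kron: "transpose_mat (kron A B) = kron (transpose_mat A) (transpose_mat B)"
  by (rule eq_matI) (auto simp: index_kron div_mod_less_of_less_mult mult.commute)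

lemma mult_kron:
  assumes A: "A \<in> carrier_mat a1 a2" and B: "B \<in> carrier_mat b1 b2"
    and C: "C \<in> carrier_mat a2 a3" and D: "D \<in> carrier_mat b2 b3"
  shows "kron A B * kron C D = kron (A * C) (B * D)"
proof (rule eq_matI)
  fix i j assume "i < dim_row (kron (A * C) (B * D))" "j < dim_col (kron (A * C) (B * D))"
  then have i: "i < a1 * b1" and j: "j < a3 * b3" using A B C D by simp_all
  have entry: "kron A B $$ (i, x * b2 + y) * kron C D $$ (x * b2 + y, j) =
      (A $$ (i div b1, x) * C $$ (x, j div b3)) * (B $$ (i mod b1, y) * D $$ (y, j mod b3))"
    if "x < a2" "y < b2" for x y
    using that A B C D i j mult_add_less_mult[OF that] by (simp add: index_kron)
  have "(kron A B * kron C D) $$ (i, j) = (\<Sum>l<a2 * b2. kron A B $$ (i, l) * kron C D $$ (l, j))"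
    using A B C D i j by (simp add: scalar_prod_def lessThan_atLeast0)
  also have "\<dots> = (\<Sum>x<a2. \<Sum>y<b2. kron A B $$ (i, x * b2 + y) * kron C D $$ (x * b2 + y, j))"
    by (rule sum_lessThan_mult)
  also have "\<dots> = (\<Sum>x<a2. A $$ (i div b1, x) * C $$ (x, j div b3))
                  * (\<Sum>y<b2. B $$ (i mod b1, y) * D $$ (y, j mod b3))"
    by (simp add: entry sum_product)
  also have "\<dots> = kron (A * C) (B * D) $$ (i, j)"
    using A B C D i j
    by (simp add: index_kron div_mod_less_of_less_mult scalar_prod_def lessThan_atLeast0)
  finally show "(kron A B * kron C D) $$ (i, j) = kron (A * C) (B * D) $$ (i, j)" .
qed (use A B C D in simp_all)

lemma kron_smult: "kron (c \<cdot>\<^sub>m A) (d \<cdot>\<^sub>m B) = (c * d) \<cdot>\<^sub>m kron A B"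
  by (rule eq_matI) (auto simp: index_kron div_mod_less_of_less_mult)

lemma kron_one: "kron (1\<^sub>m a) (1\<^sub>m b) = 1\<^sub>m (a * b)"
proof (rule eq_matI)
  fix i j assume "i < dim_row (1\<^sub>m (a * b))" "j < dim_col (1\<^sub>m (a * b))"
  moreover have "(i div b = j div b \<and> i mod b = j mod b) \<longleftrightarrow> i = j"
    by (metis div_mult_mod_eq)
  ultimately show "kron (1\<^sub>m a) (1\<^sub>m b) $$ (i, j) = 1\<^sub>m (a * b) $$ (i, j)"
    by (auto simp: index_kron div_mod_less_of_less_mult)
qed simp_all

lemma H2_carrier: "H2 \<in> carrier_mat 2 2"
  by (simp add: H2_def mat_of_rows_list_def numeral_2_eq_2)

lemma transpose_H2_mult_H2: "transpose_mat H2 * H2 = 2 \<cdot>\<^sub>m 1\<^sub>m 2"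
  by (rule eq_matI) (auto simp: H2_def mat_of_rows_list_def scalar_prod_def less_2_cases_iff)

lemma design_mat_carrier: "design_mat k \<in> carrier_mat (2 ^ k) (2 ^ k)"
proof (induction k)
  case (Suc k)
  then show ?case
    using H2_carrier by (intro carrier_matI) auto
qed simp

lemma transpose_design_mat_mult: "transpose_mat (design_mat k) * design_mat k = 2 ^ k \<cdot>\<^sub>m 1\<^sub>m (2 ^ k)"
proof (induction k)
  case (Suc k)
  have "transpose_mat (design_mat (Suc k)) * design_mat (Suc k)
      = kron (transpose_mat H2 * H2) (transpose_mat (design_mat k) * design_mat k)"
    unfolding design_mat.simps transpose_kron
    by (rule mult_kron) (use H2_carrier design_mat_carrier[of k] in auto)
  also have "\<dots> = 2 ^ Suc k \<cdot>\<^sub>m 1\<^sub>m (2 ^ Suc k)"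
    by (simp add: Suc.IH transpose_H2_mult_H2 kron_smult kron_one)
  finally show ?case .
qed (rule eq_matI; simp)

section \<open>Diagonal matrices, trace and inverse\<close>

definition diag_of :: "nat \<Rightarrow> (nat \<Rightarrow> 'a::zero) \<Rightarrow> 'a mat" where
  "diag_of n d = mat n n (\<lambda>(i, j). if i = j then d i else 0)"

lemma diag_of_carrier [simp]: "diag_of n d \<in> carrier_mat n n"
  by (simp add: diag_of_def)

lemma mult_diag_of:
  "diag_of n d * diag_of n e = diag_of n (\<lambda>i. d i * e i :: 'a::semiring_0)"
proof (rule eq_matI)
  fix i j assume "i < dim_row (diag_of n (\<lambda>i. d i * e i))" "j < dim_col (diag_of n (\<lambda>i. d i * e i))"
  then have ij: "i < n" "j < n" by (simp_all add: diag_of_def)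
  then have "(diag_of n d * diag_of n e) $$ (i, j)
      = (\<Sum>l\<in>{0..<n}. (if i = l then d i else 0) * (if l = j then e l else 0))"
    by (simp add: diag_of_def scalar_prod_def)
  also have "\<dots> = (\<Sum>l\<in>{0..<n}. if l = i then (if i = j then d i * e i else 0) else 0)"
    by (rule sum.cong) auto
  finally show "(diag_of n d * diag_of n e) $$ (i, j) = diag_of n (\<lambda>i. d i * e i) $$ (i, j)"
    using ij by (simp add: diag_of_def)
qed (simp_all add: diag_of_def)

lemma diag_of_mult_inverse:
  fixes d :: "nat \<Rightarrow> 'a::field"
  assumes "\<forall>i<n. d i \<noteq> 0"
  shows "diag_of n d * diag_of n (\<lambda>i. 1 / d i) = 1\<^sub>m n"
  unfolding mult_diag_of using assms by (auto simp: diag_of_def intro!: eq_matI)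

lemma det_diag_of: "det (diag_of n d) = (\<Prod>i<n. d i)"
proof -
  have "upper_triangular (diag_of n d)"
    by (auto simp: upper_triangular_def diag_of_def)
  then have "det (diag_of n d) = prod_list (diag_mat (diag_of n d))"
    by (rule det_upper_triangular[OF _ diag_of_carrier])
  then show ?thesis
    by (simp add: prod_list_diag_prod diag_of_def lessThan_atLeast0)
qed

lemma trace_mat_diag_of: "trace_mat (diag_of n d) = (\<Sum>i<n. d i)"
  by (simp add: trace_mat_def diag_of_def)

lemma trace_mat_smult: "A \<in> carrier_mat n n \<Longrightarrow> trace_mat (c \<cdot>\<^sub>m A) = c * trace_mat A"
  by (simp add: trace_mat_def sum_distrib_left)

lemma trace_mat_mult_commute:
  assumes "A \<in> carrier_mat n k" "B \<in> carrier_mat k n"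
  shows "trace_mat (A * B) = trace_mat (B * A)"
proof -
  have "trace_mat (A * B) = (\<Sum>i<n. \<Sum>l<k. A $$ (i, l) * B $$ (l, i))"
    using assms by (simp add: trace_mat_def scalar_prod_def lessThan_atLeast0)
  also have "\<dots> = (\<Sum>l<k. \<Sum>i<n. B $$ (l, i) * A $$ (i, l))"
    by (subst sum.swap) (simp add: mult.commute)
  also have "\<dots> = trace_mat (B * A)"
    using assms by (simp add: trace_mat_def scalar_prod_def lessThan_atLeast0)
  finally show ?thesis .
qed

lemma inv_mat_eqI:
  assumes A: "A \<in> carrier_mat n n" and B: "B \<in> carrier_mat n n" and AB: "A * B = 1\<^sub>m n"
  shows "inv_mat A = B"
  unfolding inv_mat_def
proof (rule some_equality)
  have "B * A = 1\<^sub>m n"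
    by (rule mat_mult_left_right_inverse[OF A B AB])
  then show "B \<in> carrier_mat (dim_row A) (dim_row A)
    \<and> A * B = 1\<^sub>m (dim_row A) \<and> B * A = 1\<^sub>m (dim_row A)"
    using A B AB by simp
next
  fix B'
  assume "B' \<in> carrier_mat (dim_row A) (dim_row A)
    \<and> A * B' = 1\<^sub>m (dim_row A) \<and> B' * A = 1\<^sub>m (dim_row A)"
  then have B': "B' \<in> carrier_mat n n" and B'A: "B' * A = 1\<^sub>m n" using A by auto
  have "B' = B' * (A * B)" using B' AB by simp
  also have "\<dots> = (B' * A) * B" using A B B' by (simp add: assoc_mult_mat)
  finally show "B' = B" using B B'A by simp
qed

lemma smult_smult_mat: "a \<cdot>\<^sub>m (b \<cdot>\<^sub>m A) = (a * b :: 'a::semigroup_mult) \<cdot>\<^sub>m A"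
  by (rule eq_matI) (simp_all add: mult.assoc)

lemma mult_transpose_eq_smult_one:
  fixes X :: "'a::field mat"
  assumes X: "X \<in> carrier_mat n n" and XtX: "transpose_mat X * X = c \<cdot>\<^sub>m 1\<^sub>m n" and c: "c \<noteq> 0"
  shows "X * transpose_mat X = c \<cdot>\<^sub>m 1\<^sub>m n"
proof -
  have "(1 / c) \<cdot>\<^sub>m transpose_mat X * X = 1\<^sub>m n"
    using X XtX c by (auto simp: mult_smult_assoc_mat[of _ n n] intro!: eq_matI)
  then have "X * ((1 / c) \<cdot>\<^sub>m transpose_mat X) = 1\<^sub>m n"
    by (rule mat_mult_left_right_inverse[rotated 2]) (use X in simp_all)
  then have inv: "(1 / c) \<cdot>\<^sub>m (X * transpose_mat X) = 1\<^sub>m n"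
    using X by (simp add: mult_smult_distrib[of _ n n])
  show ?thesis
  proof (rule eq_matI)
    fix i j assume "i < dim_row (c \<cdot>\<^sub>m 1\<^sub>m n)" "j < dim_col (c \<cdot>\<^sub>m 1\<^sub>m n)"
    then have ij: "i < n" "j < n" by simp_all
    have "1 / c * (X * transpose_mat X) $$ (i, j) = 1\<^sub>m n $$ (i, j)"
      using arg_cong[OF inv, of "\<lambda>A. A $$ (i, j)"] ij X by simp
    then show "(X * transpose_mat X) $$ (i, j) = (c \<cdot>\<^sub>m 1\<^sub>m n) $$ (i, j)"
      using ij c by (simp add: field_simps)
  qed (use X in simp_all)
qed

section \<open>A weighted Cauchy-Schwarz identity\<close>

lemma sum_sq_div_decomp:
  fixes a v :: "nat \<Rightarrow> real"
  assumes v: "\<forall>i<m. v i \<noteq> 0" and sum_v: "(\<Sum>i<m. v i) = 1"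
  shows "(\<Sum>i<m. a i ^ 2 / v i) = (\<Sum>i<m. a i) ^ 2 + (\<Sum>i<m. (a i - v i * (\<Sum>j<m. a j)) ^ 2 / v i)"
proof -
  define S where "S = (\<Sum>j<m. a j)"
  have "(\<Sum>i<m. (a i - v i * S) ^ 2 / v i) = (\<Sum>i<m. a i ^ 2 / v i - 2 * S * a i + S ^ 2 * v i)"
    using v by (intro sum.cong) (auto simp: field_simps power2_eq_square)
  also have "\<dots> = (\<Sum>i<m. a i ^ 2 / v i) - S ^ 2"
    using sum_v
    by (simp add: sum.distrib sum_subtractf flip: sum_distrib_left S_def)
      (simp add: power2_eq_square)
  finally show ?thesis by (simp add: S_def)
qed

lemma sq_sum_le_sum_sq_div:
  fixes a v :: "nat \<Rightarrow> real"
  assumes "\<forall>i<m. 0 < v i" and "(\<Sum>i<m. v i) = 1"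
  shows "(\<Sum>i<m. a i) ^ 2 \<le> (\<Sum>i<m. a i ^ 2 / v i)"
proof -
  have "0 \<le> (\<Sum>i<m. (a i - v i * (\<Sum>j<m. a j)) ^ 2 / v i)"
    using assms(1) by (intro sum_nonneg) auto
  moreover have "\<forall>i<m. v i \<noteq> 0"
    using assms(1) by force
  then have "(\<Sum>i<m. a i ^ 2 / v i) = (\<Sum>i<m. a i) ^ 2 + (\<Sum>i<m. (a i - v i * (\<Sum>j<m. a j)) ^ 2 / v i)"
    using assms(2) by (rule sum_sq_div_decomp)
  ultimately show ?thesis
    by linarith
qed

lemma sum_sq_div_eq_sq_sum_iff:
  fixes a v :: "nat \<Rightarrow> real"
  assumes v: "\<forall>i<m. 0 < v i" and sum_v: "(\<Sum>i<m. v i) = 1"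
  shows "(\<Sum>i<m. a i ^ 2 / v i) = (\<Sum>i<m. a i) ^ 2 \<longleftrightarrow> (\<forall>i<m. v i * (\<Sum>j<m. a j) = a i)"
proof -
  define S where "S = (\<Sum>j<m. a j)"
  have "\<forall>i<m. v i \<noteq> 0"
    using v by force
  then have decomp: "(\<Sum>i<m. a i ^ 2 / v i) = S ^ 2 + (\<Sum>i<m. (a i - v i * S) ^ 2 / v i)"
    unfolding S_def using sum_v by (rule sum_sq_div_decomp)
  have "(\<Sum>i<m. (a i - v i * S) ^ 2 / v i) = 0 \<longleftrightarrow> (\<forall>i\<in>{..<m}. (a i - v i * S) ^ 2 / v i = 0)"
    using v by (intro sum_nonneg_eq_0_iff) auto
  also have "\<dots> \<longleftrightarrow> (\<forall>i<m. v i * S = a i)"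
  proof -
    have "(a i - v i * S) ^ 2 / v i = 0 \<longleftrightarrow> v i * S = a i" if "i < m" for i
      using v that by auto
    then show ?thesis by auto
  qed
  finally show ?thesis
    by (simp add: decomp flip: S_def)
qed

lemma const_eq_mult_powr_iff:
  fixes nu :: "nat \<Rightarrow> real"
  assumes nu: "\<forall>i<m. 0 < nu i" and "d \<noteq> 0" "r \<noteq> 0"
  shows "(\<exists>c. \<forall>i<m. d = c * nu i powr r) \<longleftrightarrow> (\<forall>i<m. \<forall>j<m. nu i = nu j)"
proof
  assume "\<exists>c. \<forall>i<m. d = c * nu i powr r"
  then obtain c where c: "\<forall>i<m. d = c * nu i powr r" ..
  show "\<forall>i<m. \<forall>j<m. nu i = nu j"
  proof (intro allI impI)
    fix i j assume "i < m" "j < m"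
    then have "nu i powr r = nu j powr r"
      using c \<open>d \<noteq> 0\<close> by (metis mult_cancel_left mult_zero_left)
    then have "(nu i powr r) powr (1 / r) = (nu j powr r) powr (1 / r)" by simp
    moreover have "0 < nu i" "0 < nu j"
      using nu \<open>i < m\<close> \<open>j < m\<close> by auto
    ultimately show "nu i = nu j"
      using \<open>r \<noteq> 0\<close> by (simp add: powr_powr)
  qed
next
  assume eq: "\<forall>i<m. \<forall>j<m. nu i = nu j"
  show "\<exists>c. \<forall>i<m. d = c * nu i powr r"
  proof (intro exI allI impI)
    fix i assume "i < m"
    then have "nu i = nu 0" "0 < nu 0"
      using nu eq by blast+
    then show "d = d / nu 0 powr r * nu i powr r"
      by simp
  qed
qed

lemma powr_neg_half_sq: "0 < x \<Longrightarrow> (x powr (-1/2)) ^ 2 = 1 / (x :: real)"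
  by (simp add: power2_eq_square powr_neg_one flip: powr_add)

section \<open>Orthogonal designs\<close>

locale orthogonal_design =
  fixes X :: "real mat" and m :: nat
  assumes carrier: "X \<in> carrier_mat m m"
    and transpose_mult: "transpose_mat X * X = real m \<cdot>\<^sub>m 1\<^sub>m m"
    and size_pos: "0 < m"
begin

lemma mult_transpose: "X * transpose_mat X = real m \<cdot>\<^sub>m 1\<^sub>m m"
  using carrier transpose_mult size_pos by (simp add: mult_transpose_eq_smult_one)

lemma info_mat_eq: "info_mat X nu w = transpose_mat X * diag_of m (\<lambda>i. w i * nu i) * X"
  using carrier by (simp add: info_mat_def diag_of_def)

lemma f_crit_eq: "f_crit X nu w = real m ^ m * (\<Prod>i<m. w i * nu i)"
proof -
  have "det X * det X = real m ^ m"
    using det_mult[of "transpose_mat X" m X] carrier by (simp add: transpose_mult det_transpose)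
  then show ?thesis
    using carrier by (simp add: f_crit_def info_mat_eq det_mult[of _ m] det_transpose det_diag_of)
qed

lemma inv_mat_info_mat:
  assumes "\<forall>i<m. w i * nu i \<noteq> 0"
  shows "inv_mat (info_mat X nu w)
    = (1 / real m ^ 2) \<cdot>\<^sub>m (transpose_mat X * diag_of m (\<lambda>i. 1 / (w i * nu i)) * X)"
proof (rule inv_mat_eqI)
  let ?D = "diag_of m (\<lambda>i. w i * nu i)" and ?D' = "diag_of m (\<lambda>i. 1 / (w i * nu i))"
  note square = carrier assoc_mult_mat[of _ m m _ m _ m] mult_carrier_mat[of _ m m _ m]
    mult_smult_distrib[of _ m m _ m] mult_smult_assoc_mat[of _ m m _ m]
    left_mult_one_mat[of _ m m]
  have "info_mat X nu w * ((1 / real m ^ 2) \<cdot>\<^sub>m (transpose_mat X * ?D' * X))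
      = (1 / real m ^ 2) \<cdot>\<^sub>m (transpose_mat X * (?D * ((X * transpose_mat X) * (?D' * X))))"
    by (simp add: info_mat_eq square)
  also have "\<dots> = (1 / real m ^ 2 * real m) \<cdot>\<^sub>m (transpose_mat X * ((?D * ?D') * X))"
    by (simp add: mult_transpose square smult_smult_mat)
  also have "\<dots> = 1\<^sub>m m"
    using assms size_pos
    by (auto simp: diag_of_mult_inverse transpose_mult square power2_eq_square intro!: eq_matI)
  finally show "info_mat X nu w * ((1 / real m ^ 2) \<cdot>\<^sub>m (transpose_mat X * ?D' * X)) = 1\<^sub>m m" .
qed (simp_all add: info_mat_eq carrier mult_carrier_mat[of _ m m _ m])

lemma h_crit_eq_inverse_sum:
  assumes pos: "\<forall>i<m. 0 < w i * nu i"
  shows "h_crit X nu w = real m / (\<Sum>i<m. 1 / (w i * nu i))"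
proof -
  let ?D' = "diag_of m (\<lambda>i. 1 / (w i * nu i))"
  have "0 < (\<Prod>i<m. w i * nu i)"
    using pos by (intro prod_pos) auto
  then have f_pos: "0 < f_crit X nu w"
    using size_pos by (simp add: f_crit_eq)
  have "trace_mat (transpose_mat X * ?D' * X) = trace_mat (X * (transpose_mat X * ?D'))"
    by (rule trace_mat_mult_commute) (use carrier in auto)
  also have "X * (transpose_mat X * ?D') = real m \<cdot>\<^sub>m ?D'"
    using carrier
    by (simp add: mult_transpose mult_smult_assoc_mat[of _ m m _ m] left_mult_one_mat[OF diag_of_carrier]
        flip: assoc_mult_mat[of _ m m _ m _ m])
  finally have "trace_mat (transpose_mat X * ?D' * X) = real m * (\<Sum>i<m. 1 / (w i * nu i))"
    by (simp add: trace_mat_smult[of _ m] trace_mat_diag_of)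
  moreover have "\<forall>i<m. w i * nu i \<noteq> 0"
    using pos by force
  then have "trace_mat (inv_mat (info_mat X nu w))
      = trace_mat (transpose_mat X * ?D' * X) / real m ^ 2"
    using carrier
    by (simp add: inv_mat_info_mat trace_mat_smult[of _ m] mult_carrier_mat[of _ m m _ m])
  ultimately have "trace_mat (inv_mat (info_mat X nu w)) = (\<Sum>i<m. 1 / (w i * nu i)) / real m"
    by (simp add: power2_eq_square)
  then show ?thesis
    using f_pos by (simp add: h_crit_def)
qed

lemma h_crit_eq_0:
  assumes "i < m" "w i * nu i = 0"
  shows "h_crit X nu w = 0"
proof -
  have zero: "(\<Prod>i<m. w i * nu i) = 0"
    using assms by (intro prod_zero) auto
  show ?thesis
    unfolding h_crit_def f_crit_eq zero by simp
qed

context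
  fixes nu :: "nat \<Rightarrow> real"
  assumes nu_pos: "\<forall>i<m. 0 < nu i"
begin

lemma sum_powr_pos: "0 < (\<Sum>i<m. nu i powr (-1/2))"
  using size_pos nu_pos by (intro sum_pos) auto

lemma h_crit_interior:
  assumes "\<forall>i<m. 0 < v i"
  shows "h_crit X nu v = real m / (\<Sum>i<m. (nu i powr (-1/2)) ^ 2 / v i)"
proof -
  have "h_crit X nu v = real m / (\<Sum>i<m. 1 / (v i * nu i))"
    using assms nu_pos by (intro h_crit_eq_inverse_sum) auto
  also have "(\<Sum>i<m. 1 / (v i * nu i)) = (\<Sum>i<m. (nu i powr (-1/2)) ^ 2 / v i)"
    using nu_pos powr_neg_half_sq by (intro sum.cong) auto
  finally show ?thesis .
qed

lemma h_crit_boundary: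
  assumes "v \<in> simplex m" and "\<not> (\<forall>i<m. 0 < v i)"
  shows "h_crit X nu v = 0"
proof -
  obtain i where "i < m" "v i = 0"
    using assms by (force simp: simplex_def)
  then show ?thesis
    by (simp add: h_crit_eq_0)
qed

lemma h_crit_le_optimum:
  assumes v: "v \<in> simplex m"
  shows "h_crit X nu v \<le> real m / (\<Sum>i<m. nu i powr (-1/2)) ^ 2"
proof (cases "\<forall>i<m. 0 < v i")
  case True
  have "(\<Sum>i<m. nu i powr (-1/2)) ^ 2 \<le> (\<Sum>i<m. (nu i powr (-1/2)) ^ 2 / v i)"
    using True v by (intro sq_sum_le_sum_sq_div) (simp_all add: simplex_def)
  then show ?thesis
    using True sum_powr_pos by (auto simp: h_crit_interior intro!: frac_le)
next
  case False
  then show ?thesis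
    using v by (simp add: h_crit_boundary)
qed

lemma h_crit_eq_optimum_iff:
  assumes v: "v \<in> simplex m"
  shows "h_crit X nu v = real m / (\<Sum>i<m. nu i powr (-1/2)) ^ 2
    \<longleftrightarrow> (\<forall>i<m. v i * (\<Sum>j<m. nu j powr (-1/2)) = nu i powr (-1/2))"
proof (cases "\<forall>i<m. 0 < v i")
  case True
  have "0 < (\<Sum>i<m. (nu i powr (-1/2)) ^ 2 / v i)"
    using True size_pos nu_pos by (intro sum_pos) auto
  then have "h_crit X nu v = real m / (\<Sum>i<m. nu i powr (-1/2)) ^ 2
      \<longleftrightarrow> (\<Sum>i<m. (nu i powr (-1/2)) ^ 2 / v i) = (\<Sum>i<m. nu i powr (-1/2)) ^ 2"
    using True size_pos sum_powr_pos by (simp add: h_crit_interior field_simps)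
  also have "\<dots> \<longleftrightarrow> (\<forall>i<m. v i * (\<Sum>j<m. nu j powr (-1/2)) = nu i powr (-1/2))"
    using True v by (intro sum_sq_div_eq_sq_sum_iff) (simp_all add: simplex_def)
  finally show ?thesis .
next
  case False
  then obtain i where "i < m" "v i = 0"
    using v by (force simp: simplex_def)
  then have "\<not> (\<forall>i<m. v i * (\<Sum>j<m. nu j powr (-1/2)) = nu i powr (-1/2))"
    using nu_pos by force
  moreover have "h_crit X nu v \<noteq> real m / (\<Sum>i<m. nu i powr (-1/2)) ^ 2"
    using False v size_pos sum_powr_pos by (simp add: h_crit_boundary)
  ultimately show ?thesis
    by simp
qed

theorem A_optimal_iff_proportional:
  assumes w: "w \<in> simplex m"
  shows "A_optimal X nu w \<longleftrightarrow> (\<exists>c. \<forall>i<m. w i = c * nu i powr (-1/2))"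
proof -
  define S where "S = (\<Sum>i<m. nu i powr (-1/2))"
  have S_pos: "0 < S"
    unfolding S_def by (rule sum_powr_pos)
  have opt: "(\<lambda>i. nu i powr (-1/2) / S) \<in> simplex m"
    using S_pos by (simp add: simplex_def S_def flip: sum_divide_distrib)
  then have h_opt: "h_crit X nu (\<lambda>i. nu i powr (-1/2) / S) = real m / S ^ 2"
    using h_crit_eq_optimum_iff[OF opt] S_pos unfolding S_def[symmetric] by simp
  have "A_optimal X nu w \<longleftrightarrow> (\<forall>v\<in>simplex m. h_crit X nu v \<le> h_crit X nu w)"
    using w carrier by (simp add: A_optimal_def)
  also have "\<dots> \<longleftrightarrow> h_crit X nu w = real m / S ^ 2"
    using w opt h_opt h_crit_le_optimum unfolding S_def by (metis order_antisym)
  also have "\<dots> \<longleftrightarrow> (\<forall>i<m. w i * S = nu i powr (-1/2))"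
    unfolding S_def using w by (rule h_crit_eq_optimum_iff)
  also have "\<dots> \<longleftrightarrow> (\<exists>c. \<forall>i<m. w i = c * nu i powr (-1/2))"
  proof
    assume "\<forall>i<m. w i * S = nu i powr (-1/2)"
    then have "\<forall>i<m. w i = 1 / S * nu i powr (-1/2)"
      using S_pos by (auto simp: field_simps)
    then show "\<exists>c. \<forall>i<m. w i = c * nu i powr (-1/2)" ..
  next
    assume "\<exists>c. \<forall>i<m. w i = c * nu i powr (-1/2)"
    then obtain c where c: "\<forall>i<m. w i = c * nu i powr (-1/2)" ..
    have "1 = (\<Sum>i<m. w i)"
      using w by (simp add: simplex_def)
    also have "\<dots> = c * S"
      using c by (simp add: S_def sum_distrib_left)
    finally show "\<forall>i<m. w i * S = nu i powr (-1/2)"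
      using c by (metis mult.commute mult.left_commute mult_1_right)
  qed
  finally show ?thesis .
qed

end

end

theorem corollary1:
  fixes k :: nat and nu :: "nat \<Rightarrow> real" and w :: "nat \<Rightarrow> real"
  assumes "1 \<le> k"
    and "\<And>i. i < 2 ^ k \<Longrightarrow> nu i > 0"
  shows "(w \<in> simplex (2 ^ k) \<longrightarrow>
            (A_optimal (design_mat k) nu w \<longleftrightarrow>
              (\<exists>c. \<forall>i < 2 ^ k. w i = c * nu i powr (-1/2))))
       \<and> (A_optimal (design_mat k) nu (\<lambda>i. 1 / 2 ^ k) \<longleftrightarrow>
              (\<forall>i < 2 ^ k. \<forall>j < 2 ^ k. nu i = nu j))"
proof -
  interpret orthogonal_design "design_mat k" "2 ^ k"
    by unfold_locales (simp_all add: design_mat_carrier transpose_design_mat_mult)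
  have nu: "\<forall>i<2 ^ k. 0 < nu i"
    using assms(2) by blast
  have uniform: "(\<lambda>i. 1 / 2 ^ k :: real) \<in> simplex (2 ^ k)"
    by (simp add: simplex_def)
  show ?thesis
    using A_optimal_iff_proportional[OF nu] A_optimal_iff_proportional[OF nu uniform]
      const_eq_mult_powr_iff[OF nu, of "1 / 2 ^ k" "-1/2"]
    by simp
qed

end
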